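(* Let $\Gamma$ be a finite simple graph with a linear order on $V(\Gamma)$. Let $n\ge1$ and $a,g,b\in G(\Gamma)$ such that $ag^nb$ is geodesic (i.e. $|ag^nb|=|a|+n|g|+|b|$) and $g$ is strongly non-split and SD-conical. Then $$\sigma(ag^nb)\equiv\sigma(a)\underbrace{\sigma(g)\cdots\sigma(g)}_{n-1}\sigma(gb).$$
   Context: $G(\Gamma)=\langle v\in V(\Gamma)\mid [v_i,v_j]=1 \text{ if } \{v_i,v_j\}\notin E(\Gamma)\rangle$. $|g|$ is word length; reduced word = shortest representative; $\mathrm{supp}(g)$ = set of generators $v$ with $v^{\pm1}$ in a reduced word for $g$; $\equiv$ is letterwise equality of words. $g_1,g_2$ disjointly commute if their supports are disjoint and every generator of one commutes with every generator of the other (i.e. they are non-adjacent in $\Gamma$). $g$ is non-split if $\mathrm{supp}(g)$ spans a connected subgraph; strongly non-split if non-split and no generator disjointly commutes with $g$. $S(g)$ = set of $v\in V(\Gamma)$ such that some reduced word for $g$ begins with $v^{\pm1}$. $g$ is conical with apex $v_0$ if $S(g)=\{v_0\}$; SD-conical if moreover $v<v_0$ implies $\{v,v_0\}\in E(\Gamma)$. A reduced word for $g$ is initially normal if it is empty or its first letter is $v^{\pm1}$ with $v$ the largest element of $S(g)$; normal if all its suffixes are initially normal; $\sigma(g)$ is the unique normal word representing $g$ (CGW-normal form). *)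

theory Defs
  imports Main
begin

(* Graph Gamma: finite vertex type 'v (class finite), linearly ordered (class linorder),
   simple graph given by a symmetric irreflexive edge relation E.
   G(Gamma) = < V | [u,v] = 1 whenever {u,v} is NOT an edge >.
   Letters: (v, True) = v, (v, False) = v^-1. Group elements are represented by words;
   two words represent the same element iff they are related by rel_eq E. *)

type_synonym 'v letter = "'v \<times> bool"

definition inv_letter :: "'v letter \<Rightarrow> 'v letter" where
  "inv_letter l = (fst l, \<not> snd l)"

inductive raag_step :: "('v \<Rightarrow> 'v \<Rightarrow> bool) \<Rightarrow> 'v letter list \<Rightarrow> 'v letter list \<Rightarrow> bool"
  for E where
  cancel: "raag_step E (xs @ [l, inv_letter l] @ ys) (xs @ ys)"
| swap: "u \<noteq> v \<Longrightarrow> \<not> E u v \<Longrightarrow>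
         raag_step E (xs @ [(u,s),(v,t)] @ ys) (xs @ [(v,t),(u,s)] @ ys)"

definition rel_eq :: "('v \<Rightarrow> 'v \<Rightarrow> bool) \<Rightarrow> 'v letter list \<Rightarrow> 'v letter list \<Rightarrow> bool" where
  "rel_eq E = equivclp (raag_step E)"

definition wlen :: "('v \<Rightarrow> 'v \<Rightarrow> bool) \<Rightarrow> 'v letter list \<Rightarrow> nat" where
  "wlen E w = (LEAST n. \<exists>u. rel_eq E u w \<and> length u = n)"

definition reduced :: "('v \<Rightarrow> 'v \<Rightarrow> bool) \<Rightarrow> 'v letter list \<Rightarrow> bool" where
  "reduced E w \<longleftrightarrow> length w = wlen E w"

definition supp :: "('v \<Rightarrow> 'v \<Rightarrow> bool) \<Rightarrow> 'v letter list \<Rightarrow> 'v set" where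
  "supp E w = {v. \<exists>u. rel_eq E u w \<and> reduced E u \<and> v \<in> fst ` set u}"

definition disj_commute :: "('v \<Rightarrow> 'v \<Rightarrow> bool) \<Rightarrow> 'v letter list \<Rightarrow> 'v letter list \<Rightarrow> bool" where
  "disj_commute E g1 g2 \<longleftrightarrow> supp E g1 \<inter> supp E g2 = {} \<and>
     (\<forall>x\<in>supp E g1. \<forall>y\<in>supp E g2. \<not> E x y)"

definition connected_sub :: "('v \<Rightarrow> 'v \<Rightarrow> bool) \<Rightarrow> 'v set \<Rightarrow> bool" where
  "connected_sub E S \<longleftrightarrow> (\<forall>x\<in>S. \<forall>y\<in>S. (\<lambda>a b. a \<in> S \<and> b \<in> S \<and> E a b)\<^sup>*\<^sup>* x y)"

definition non_split :: "('v \<Rightarrow> 'v \<Rightarrow> bool) \<Rightarrow> 'v letter list \<Rightarrow> bool" where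
  "non_split E g \<longleftrightarrow> connected_sub E (supp E g)"

definition strongly_non_split :: "('v \<Rightarrow> 'v \<Rightarrow> bool) \<Rightarrow> 'v letter list \<Rightarrow> bool" where
  "strongly_non_split E g \<longleftrightarrow> non_split E g \<and> (\<forall>v. \<not> disj_commute E [(v, True)] g)"

definition start_set :: "('v \<Rightarrow> 'v \<Rightarrow> bool) \<Rightarrow> 'v letter list \<Rightarrow> 'v set" where
  "start_set E w = {v. \<exists>u. rel_eq E u w \<and> reduced E u \<and> u \<noteq> [] \<and> fst (hd u) = v}"

definition conical :: "('v \<Rightarrow> 'v \<Rightarrow> bool) \<Rightarrow> 'v letter list \<Rightarrow> 'v \<Rightarrow> bool" where
  "conical E g v0 \<longleftrightarrow> start_set E g = {v0}"

definition SD_conical :: "('v \<Rightarrow> 'v \<Rightarrow> bool) \<Rightarrow> 'v::linorder letter list \<Rightarrow> 'v \<Rightarrow> bool" where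
  "SD_conical E g v0 \<longleftrightarrow> conical E g v0 \<and> (\<forall>v. v < v0 \<longrightarrow> E v v0)"

definition initially_normal :: "('v \<Rightarrow> 'v \<Rightarrow> bool) \<Rightarrow> 'v::{finite,linorder} letter list \<Rightarrow> bool" where
  "initially_normal E w \<longleftrightarrow> reduced E w \<and> (w = [] \<or> fst (hd w) = Max (start_set E w))"

definition normal :: "('v \<Rightarrow> 'v \<Rightarrow> bool) \<Rightarrow> 'v::{finite,linorder} letter list \<Rightarrow> bool" where
  "normal E w \<longleftrightarrow> (\<forall>k \<le> length w. initially_normal E (drop k w))"

definition sigma :: "('v \<Rightarrow> 'v \<Rightarrow> bool) \<Rightarrow> 'v::{finite,linorder} letter list \<Rightarrow> 'v letter list" where
  "sigma E w = (THE u. normal E u \<and> rel_eq E u w)"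

definition wpow :: "'a list \<Rightarrow> nat \<Rightarrow> 'a list" where
  "wpow w n = concat (replicate n w)"

end

theory Submission
  imports Defs
begin

(*
  Two reduced words represent the same element of G(Gamma) iff they differ by swaps of adjacent
  commuting letters; this is the word problem, solved by van der Waerden's trick of letting words
  act on shuffle classes of reduced words. Hence the start set of a reduced word consists of the
  letters that can be shuffled to its front. If x and y are normal, x y is reduced, every start
  letter of y is v0 and every vertex below v0 is adjacent to v0, then x y is normal: a letter of y
  can only surface past the first letter m of x if it commutes with m, and then v0 <= m.

  Geodesicity of a g^n b makes sigma(a) sigma(g)^(n-1) sigma(g b) and sigma(g) sigma(b) reduced.
  As g is strongly non-split, no letter can be shuffled past a copy of sigma(g), so sigma(g b) and
  every sigma(g)^k sigma(g b) start only with v0. Gluing from the right, the word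
  sigma(a) sigma(g)^(n-1) sigma(g b) is normal, so it is sigma(a g^n b).
*)

section \<open>Shuffle equivalence\<close>

lemma append_eq_append_Cons_conv:
  "x @ y = p @ c # q \<longleftrightarrow> (\<exists>r. x = p @ c # r \<and> q = r @ y) \<or> (\<exists>r. p = x @ r \<and> y = r @ c # q)"
  by (auto simp: append_eq_append_conv2 append_eq_Cons_conv)

lemma append_pair_eq_append_Cons_cases:
  assumes "xs @ a # b # ys = p @ c # q"
  obtains r where "p = xs @ a # b # r" "ys = r @ c # q"
  | "p = xs" "c = a" "q = b # ys"
  | "p = xs @ [a]" "c = b" "q = ys"
  | r where "xs = p @ c # r" "q = r @ a # b # ys"
  using assms unfolding append_eq_append_Cons_conv[of xs] by (auto simp: Cons_eq_append_conv)

definition commutes :: "('v \<Rightarrow> 'v \<Rightarrow> bool) \<Rightarrow> 'v \<Rightarrow> 'v \<Rightarrow> bool" where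
  "commutes E x y \<longleftrightarrow> x \<noteq> y \<and> \<not> E x y \<and> \<not> E y x"

abbreviation commutes_past :: "('v \<Rightarrow> 'v \<Rightarrow> bool) \<Rightarrow> 'v letter \<Rightarrow> 'v letter list \<Rightarrow> bool" where
  "commutes_past E c p \<equiv> \<forall>x\<in>set p. commutes E (fst x) (fst c)"

lemma commutes_sym: "commutes E x y \<Longrightarrow> commutes E y x"
  by (auto simp: commutes_def)

lemma commutes_irrefl [simp]: "\<not> commutes E x x"
  by (simp add: commutes_def)

definition shuffle_step :: "('v \<Rightarrow> 'v \<Rightarrow> bool) \<Rightarrow> 'v letter list \<Rightarrow> 'v letter list \<Rightarrow> bool" where
  "shuffle_step E w w' \<longleftrightarrow>
     (\<exists>xs a b ys. commutes E (fst a) (fst b) \<and> w = xs @ a # b # ys \<and> w' = xs @ b # a # ys)"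

definition shuffle_eq :: "('v \<Rightarrow> 'v \<Rightarrow> bool) \<Rightarrow> 'v letter list \<Rightarrow> 'v letter list \<Rightarrow> bool" where
  "shuffle_eq E = (shuffle_step E)\<^sup>*\<^sup>*"

lemma shuffle_step_sym: "shuffle_step E w w' \<Longrightarrow> shuffle_step E w' w"
  unfolding shuffle_step_def by (metis commutes_sym)

lemma shuffle_step_append_cong: "shuffle_step E u v \<Longrightarrow> shuffle_step E (x @ u @ y) (x @ v @ y)"
  unfolding shuffle_step_def by (metis append.assoc append_Cons)

lemma shuffle_step_length: "shuffle_step E u v \<Longrightarrow> length u = length v"
  by (auto simp: shuffle_step_def)

lemma shuffle_step_set: "shuffle_step E u v \<Longrightarrow> set u = set v"
  by (auto simp: shuffle_step_def)

lemma shuffle_eq_refl [simp]: "shuffle_eq E w w"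
  by (simp add: shuffle_eq_def)

lemma shuffle_eq_trans [trans]: "shuffle_eq E u v \<Longrightarrow> shuffle_eq E v w \<Longrightarrow> shuffle_eq E u w"
  by (simp add: shuffle_eq_def)

lemma shuffle_eq_sym: "shuffle_eq E u v \<Longrightarrow> shuffle_eq E v u"
  unfolding shuffle_eq_def
  by (induction rule: rtranclp_induct) (auto intro: converse_rtranclp_into_rtranclp shuffle_step_sym)

lemma shuffle_eq_append_cong: "shuffle_eq E u v \<Longrightarrow> shuffle_eq E (x @ u @ y) (x @ v @ y)"
  unfolding shuffle_eq_def
  by (induction rule: rtranclp_induct) (auto intro: rtranclp.rtrancl_into_rtrancl shuffle_step_append_cong)

lemma shuffle_eq_Cons: "shuffle_eq E u v \<Longrightarrow> shuffle_eq E (c # u) (c # v)"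
  using shuffle_eq_append_cong[of E u v "[c]" "[]"] by simp

lemma shuffle_eq_append: "shuffle_eq E u u' \<Longrightarrow> shuffle_eq E v v' \<Longrightarrow> shuffle_eq E (u @ v) (u' @ v')"
  using shuffle_eq_append_cong[of E u u' "[]" v] shuffle_eq_append_cong[of E v v' u' "[]"]
  by (auto intro: shuffle_eq_trans)

lemma shuffle_eq_length: "shuffle_eq E u v \<Longrightarrow> length u = length v"
  unfolding shuffle_eq_def by (induction rule: rtranclp_induct) (auto dest: shuffle_step_length)

lemma shuffle_eq_set: "shuffle_eq E u v \<Longrightarrow> set u = set v"
  unfolding shuffle_eq_def by (induction rule: rtranclp_induct) (auto dest: shuffle_step_set)

lemma shuffle_eq_Nil_iff [simp]: "shuffle_eq E [] v \<longleftrightarrow> v = []"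
  using shuffle_eq_length by fastforce

lemma shuffle_eq_swap:
  "commutes E (fst a) (fst b) \<Longrightarrow> shuffle_eq E (xs @ a # b # ys) (xs @ b # a # ys)"
  unfolding shuffle_eq_def shuffle_step_def by (intro r_into_rtranclp) blast

lemma shuffle_eq_move_to_front:
  "commutes_past E c p \<Longrightarrow> shuffle_eq E (p @ c # q) (c # p @ q)"
proof (induction p arbitrary: q rule: rev_induct)
  case (snoc x p)
  then have "shuffle_eq E (p @ x # c # q) (p @ c # x # q)"
    by (simp add: shuffle_eq_swap)
  with snoc show ?case by (auto intro: shuffle_eq_trans)
qed simp

lemma shuffle_step_preserves_front_split:
  assumes "shuffle_step E w w'" "w = p @ c # q" "commutes_past E c p"
  obtains p' q' where "w' = p' @ c # q'" "commutes_past E c p'" "shuffle_eq E (p @ q) (p' @ q')"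
proof -
  obtain xs a b ys where ab: "commutes E (fst a) (fst b)" "w = xs @ a # b # ys" "w' = xs @ b # a # ys"
    using assms(1) unfolding shuffle_step_def by blast
  from ab(2) assms(2) have "xs @ a # b # ys = p @ c # q" by simp
  then show ?thesis
  proof (cases rule: append_pair_eq_append_Cons_cases)
    case (1 r)
    show ?thesis
    proof (rule that)
      show "w' = (xs @ b # a # r) @ c # q" using ab(3) 1 by simp
      show "commutes_past E c (xs @ b # a # r)" using assms(3) 1 by auto
      show "shuffle_eq E (p @ q) ((xs @ b # a # r) @ q)"
        using 1 shuffle_eq_swap[OF ab(1), of xs "r @ q"] by simp
    qed
  next
    case 2
    show ?thesis
    proof (rule that)
      show "w' = (p @ [b]) @ c # ys" using ab(3) 2 by simp
      show "commutes_past E c (p @ [b])" using assms(3) 2 ab(1) commutes_sym by auto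
    qed (use 2 in simp)
  next
    case 3
    show ?thesis
      by (rule that[of xs "a # q"]) (use ab(3) assms(3) 3 in auto)
  next
    case (4 r)
    show ?thesis
    proof (rule that)
      show "w' = p @ c # (r @ b # a # ys)" using ab(3) 4 by simp
      show "shuffle_eq E (p @ q) (p @ r @ b # a # ys)"
        using 4 shuffle_eq_swap[OF ab(1), of "p @ r" ys] by simp
    qed (use assms(3) in simp)
  qed
qed

lemma shuffle_eq_Cons_iff:
  "shuffle_eq E w (c # z) \<longleftrightarrow> (\<exists>p q. w = p @ c # q \<and> commutes_past E c p \<and> shuffle_eq E (p @ q) z)"
proof
  assume "shuffle_eq E w (c # z)"
  then have "shuffle_eq E (c # z) w" by (rule shuffle_eq_sym)
  then have "\<exists>p q. w = p @ c # q \<and> commutes_past E c p \<and> shuffle_eq E z (p @ q)"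
    unfolding shuffle_eq_def
  proof (induction rule: rtranclp_induct)
    case base
    show ?case by (rule exI[of _ "[]"]) auto
  next
    case (step w w')
    then obtain p q where "w = p @ c # q" "commutes_past E c p" "shuffle_eq E z (p @ q)"
      by (auto simp: shuffle_eq_def)
    with step(2) show ?case
      unfolding shuffle_eq_def[symmetric]
      by (elim shuffle_step_preserves_front_split) (auto intro: shuffle_eq_trans)
  qed
  then show "\<exists>p q. w = p @ c # q \<and> commutes_past E c p \<and> shuffle_eq E (p @ q) z"
    using shuffle_eq_sym by blast
next
  assume "\<exists>p q. w = p @ c # q \<and> commutes_past E c p \<and> shuffle_eq E (p @ q) z"
  then show "shuffle_eq E w (c # z)"
    by (auto intro: shuffle_eq_trans shuffle_eq_move_to_front shuffle_eq_Cons)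
qed

lemma front_split_unique:
  assumes "p1 @ c # q1 = p2 @ c # q2" "commutes_past E c p1" "commutes_past E c p2"
  shows "p1 = p2" "q1 = q2"
proof -
  have "c \<notin> set p1" "c \<notin> set p2" using assms(2,3) by auto
  with assms(1) show "p1 = p2" "q1 = q2"
    by (auto simp: append_eq_append_Cons_conv Cons_eq_append_conv)
qed

lemma shuffle_eq_Cons_cancel:
  assumes "shuffle_eq E w (c # w1)" "shuffle_eq E w (c # w2)"
  shows "shuffle_eq E w1 w2"
proof -
  obtain p1 q1 p2 q2 where
    "w = p1 @ c # q1" "commutes_past E c p1" "shuffle_eq E (p1 @ q1) w1"
    "w = p2 @ c # q2" "commutes_past E c p2" "shuffle_eq E (p2 @ q2) w2"
    using assms unfolding shuffle_eq_Cons_iff by metis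
  then show ?thesis
    using front_split_unique[of p1 c q1 p2 q2 E] by (auto intro: shuffle_eq_trans shuffle_eq_sym)
qed

lemma shuffle_eq_Cons_Cons:
  assumes "shuffle_eq E w (m # w1)" "shuffle_eq E w (m' # w2)" "m \<noteq> m'"
  shows "commutes E (fst m) (fst m') \<and> (\<exists>w3. shuffle_eq E w1 (m' # w3) \<and> shuffle_eq E w2 (m # w3))"
proof -
  have ordered: "commutes E (fst m) (fst m') \<and> (\<exists>w3. shuffle_eq E u (m' # w3) \<and> shuffle_eq E v (m # w3))"
    if "commutes_past E m p" "commutes_past E m' (p @ m # r)"
      "shuffle_eq E (p @ r @ m' # q) u" "shuffle_eq E (p @ m # r @ q) v"
    for m p m' r q u v
  proof -
    have "shuffle_eq E (p @ r @ m' # q) (m' # p @ r @ q)"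
      using shuffle_eq_move_to_front[where c = m' and p = "p @ r"] that(2) by simp
    moreover have "shuffle_eq E (p @ m # r @ q) (m # p @ r @ q)"
      using shuffle_eq_move_to_front[OF that(1)] by simp
    moreover have "commutes E (fst m) (fst m')" using that(2) by simp
    ultimately show ?thesis
      using that(3,4) by (meson shuffle_eq_trans shuffle_eq_sym)
  qed
  obtain p1 q1 p2 q2 where split1: "w = p1 @ m # q1" "commutes_past E m p1" "shuffle_eq E (p1 @ q1) w1"
    and split2: "w = p2 @ m' # q2" "commutes_past E m' p2" "shuffle_eq E (p2 @ q2) w2"
    using assms(1,2) unfolding shuffle_eq_Cons_iff by blast
  from split1(1) split2(1) have "p1 @ m # q1 = p2 @ m' # q2" by simp
  then consider r where "p2 = p1 @ m # r" "q1 = r @ m' # q2"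
    | r where "p1 = p2 @ m' # r" "q2 = r @ m # q1"
    using assms(3) by (auto simp: append_eq_append_Cons_conv Cons_eq_append_conv)
  then show ?thesis
  proof cases
    case (1 r)
    then show ?thesis
      using ordered[where p = p1 and r = r and q = q2 and u = w1 and v = w2] split1 split2 by simp
  next
    case (2 r)
    then show ?thesis
      using ordered[where m = m' and p = p2 and m' = m and r = r and q = q1 and u = w2 and v = w1]
        split1 split2 commutes_sym by auto
  qed
qed

lemma shuffle_eq_Cons_other:
  assumes "shuffle_eq E (m # w) (c # z)" "m \<noteq> c"
  obtains z' where "shuffle_eq E w (c # z')"
  using shuffle_eq_Cons_Cons[OF shuffle_eq_refl assms(1) assms(2)] by blast

section \<open>The word problem\<close>

lemma rel_eq_refl [simp]: "rel_eq E u u"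
  by (simp add: rel_eq_def)

lemma rel_eq_sym: "rel_eq E u w \<Longrightarrow> rel_eq E w u"
  unfolding rel_eq_def by (rule equivclp_sym)

lemma rel_eq_trans [trans]: "rel_eq E u v \<Longrightarrow> rel_eq E v w \<Longrightarrow> rel_eq E u w"
  unfolding rel_eq_def by (rule equivclp_trans)

lemma raag_step_append_cong: "raag_step E u v \<Longrightarrow> raag_step E (x @ u @ y) (x @ v @ y)"
  by (induction rule: raag_step.induct) (metis append.assoc raag_step.intros)+

lemma rel_eq_append_cong: "rel_eq E u v \<Longrightarrow> rel_eq E (x @ u @ y) (x @ v @ y)"
  unfolding rel_eq_def
  by (induction rule: equivclp_induct) (auto intro: equivclp_into_equivclp raag_step_append_cong)

lemma rel_eq_append: "rel_eq E u u' \<Longrightarrow> rel_eq E v v' \<Longrightarrow> rel_eq E (u @ v) (u' @ v')"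
  using rel_eq_append_cong[of E u u' "[]" v] rel_eq_append_cong[of E v v' u' "[]"]
  by (auto intro: rel_eq_trans)

lemma raag_step_if_shuffle_step: "shuffle_step E u w \<Longrightarrow> raag_step E u w"
  unfolding shuffle_step_def commutes_def
  using raag_step.swap[of "fst a" "fst b" E xs "snd a" "snd b" ys for a b xs ys] by fastforce

lemma rel_eq_if_shuffle_eq: "shuffle_eq E u w \<Longrightarrow> rel_eq E u w"
  unfolding shuffle_eq_def rel_eq_def
  by (induction rule: rtranclp_induct) (auto intro: equivclp_into_equivclp raag_step_if_shuffle_step)

lemma rel_eq_cancel: "rel_eq E (x @ l # inv_letter l # y) (x @ y)"
  unfolding rel_eq_def using raag_step.cancel[of E x l y] by (simp add: r_into_equivclp)

lemma inv_letter_inv_letter [simp]: "inv_letter (inv_letter l) = l"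
  by (simp add: inv_letter_def)

lemma fst_inv_letter [simp]: "fst (inv_letter l) = fst l"
  by (simp add: inv_letter_def)

definition shuffle_reduced :: "('v \<Rightarrow> 'v \<Rightarrow> bool) \<Rightarrow> 'v letter list \<Rightarrow> bool" where
  "shuffle_reduced E w \<longleftrightarrow> \<not> (\<exists>x l y. shuffle_eq E w (x @ l # inv_letter l # y))"

lemma shuffle_reduced_shuffle_eq: "shuffle_eq E u w \<Longrightarrow> shuffle_reduced E u \<Longrightarrow> shuffle_reduced E w"
  unfolding shuffle_reduced_def by (blast intro: shuffle_eq_trans)

lemma shuffle_reduced_Nil [simp]: "shuffle_reduced E []"
  by (simp add: shuffle_reduced_def)

lemma shuffle_reduced_appendD:
  assumes "shuffle_reduced E (x @ y)"
  shows "shuffle_reduced E x" "shuffle_reduced E y"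
proof -
  have irred: "\<not> shuffle_eq E (x @ y) (u @ l # inv_letter l # v)" for u l v
    using assms unfolding shuffle_reduced_def by blast
  show "shuffle_reduced E x"
    unfolding shuffle_reduced_def
  proof clarify
    fix u l v
    assume "shuffle_eq E x (u @ l # inv_letter l # v)"
    from shuffle_eq_append[OF this shuffle_eq_refl]
    have "shuffle_eq E (x @ y) (u @ l # inv_letter l # v @ y)" by simp
    with irred show False by blast
  qed
  show "shuffle_reduced E y"
    unfolding shuffle_reduced_def
  proof clarify
    fix u l v
    assume "shuffle_eq E y (u @ l # inv_letter l # v)"
    from shuffle_eq_append[OF shuffle_eq_refl this]
    have "shuffle_eq E (x @ y) ((x @ u) @ l # inv_letter l # v)" by simp
    with irred show False by blast
  qed
qed

lemma shuffle_reduced_ConsI: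
  assumes "shuffle_reduced E w" "\<not> (\<exists>z. shuffle_eq E w (inv_letter l # z))"
  shows "shuffle_reduced E (l # w)"
proof -
  from assms(1) have red: "\<not> shuffle_eq E w (x @ m # inv_letter m # y)" for x m y
    unfolding shuffle_reduced_def by blast
  have no_cancel: "\<not> shuffle_eq E w (inv_letter l # z)" for z
    using assms(2) by blast
  show "shuffle_reduced E (l # w)"
    unfolding shuffle_reduced_def
  proof clarify
    fix x m y
    assume "shuffle_eq E (l # w) (x @ m # inv_letter m # y)"
    from shuffle_eq_sym[OF this] obtain p q where pq: "x @ m # inv_letter m # y = p @ l # q"
      "commutes_past E l p" "shuffle_eq E w (p @ q)"
      unfolding shuffle_eq_Cons_iff by (blast intro: shuffle_eq_sym)
    from pq(1) show False
    proof (cases rule: append_pair_eq_append_Cons_cases)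
      case (1 r)
      then show False using pq(3) red[of x m "r @ q"] by simp
    next
      case 2
      have "shuffle_eq E (x @ inv_letter l # y) (inv_letter l # x @ y)"
        using pq(2) 2 by (intro shuffle_eq_move_to_front) simp
      moreover have "shuffle_eq E w (x @ inv_letter l # y)"
        using pq(3) 2 by simp
      ultimately show False using no_cancel shuffle_eq_trans by blast
    next
      case 3
      then show False using pq(2) by simp
    next
      case (4 r)
      then show False using pq(3) red[of "p @ r" m y] by simp
    qed
  qed
qed

lemma shuffle_reduced_Cons_iff:
  "shuffle_reduced E (l # w) \<longleftrightarrow> shuffle_reduced E w \<and> \<not> (\<exists>z. shuffle_eq E w (inv_letter l # z))"
proof
  assume red: "shuffle_reduced E (l # w)"
  have "\<not> shuffle_eq E w (inv_letter l # z)" for z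
  proof
    assume "shuffle_eq E w (inv_letter l # z)"
    from shuffle_eq_Cons[OF this, of l] have "shuffle_eq E (l # w) ([] @ l # inv_letter l # z)"
      by simp
    with red show False unfolding shuffle_reduced_def by blast
  qed
  moreover have "shuffle_reduced E w" using shuffle_reduced_appendD(2)[of E "[l]" w] red by simp
  ultimately show "shuffle_reduced E w \<and> \<not> (\<exists>z. shuffle_eq E w (inv_letter l # z))" by blast
qed (use shuffle_reduced_ConsI in blast)

(* After a cancellation the result is only determined up to shuffle_eq (letter_act_cancel). *)
definition letter_act :: "('v \<Rightarrow> 'v \<Rightarrow> bool) \<Rightarrow> 'v letter \<Rightarrow> 'v letter list \<Rightarrow> 'v letter list" where
  "letter_act E l w =
     (if \<exists>z. shuffle_eq E w (inv_letter l # z) then SOME z. shuffle_eq E w (inv_letter l # z) else l # w)"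

lemma letter_act_cancel:
  assumes "shuffle_eq E w (inv_letter l # z)"
  shows "shuffle_eq E (letter_act E l w) z"
proof -
  from assms have "shuffle_eq E w (inv_letter l # (SOME z. shuffle_eq E w (inv_letter l # z)))"
    by (rule someI)
  with assms show ?thesis
    unfolding letter_act_def by (auto intro: shuffle_eq_Cons_cancel)
qed

lemma letter_act_no_cancel:
  "\<not> (\<exists>z. shuffle_eq E w (inv_letter l # z)) \<Longrightarrow> letter_act E l w = l # w"
  by (simp add: letter_act_def)

lemma letter_act_cong:
  assumes "shuffle_eq E w w'"
  shows "shuffle_eq E (letter_act E l w) (letter_act E l w')"
proof (cases "\<exists>z. shuffle_eq E w (inv_letter l # z)")
  case True
  then obtain z where z: "shuffle_eq E w (inv_letter l # z)" by blast
  moreover from this have "shuffle_eq E w' (inv_letter l # z)"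
    using assms shuffle_eq_sym shuffle_eq_trans by blast
  ultimately show ?thesis
    using letter_act_cancel shuffle_eq_sym shuffle_eq_trans by metis
next
  case False
  then have "\<not> (\<exists>z. shuffle_eq E w' (inv_letter l # z))"
    using assms shuffle_eq_trans by blast
  with False show ?thesis
    using assms by (simp add: letter_act_no_cancel shuffle_eq_Cons)
qed

lemma letter_act_reduced:
  assumes "shuffle_reduced E w"
  shows "shuffle_reduced E (letter_act E l w)"
proof (cases "\<exists>z. shuffle_eq E w (inv_letter l # z)")
  case True
  then obtain z where z: "shuffle_eq E w (inv_letter l # z)" by blast
  then have "shuffle_reduced E z"
    using shuffle_reduced_shuffle_eq[OF z assms] shuffle_reduced_Cons_iff by blast
  then show ?thesis
    using shuffle_reduced_shuffle_eq[OF shuffle_eq_sym[OF letter_act_cancel[OF z]]] by blast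
next
  case False
  then show ?thesis using assms by (simp add: letter_act_no_cancel shuffle_reduced_Cons_iff)
qed

lemma letter_act_inv_letter:
  assumes "shuffle_reduced E w"
  shows "shuffle_eq E (letter_act E (inv_letter l) (letter_act E l w)) w"
proof (cases "\<exists>z. shuffle_eq E w (inv_letter l # z)")
  case True
  then obtain z where z: "shuffle_eq E w (inv_letter l # z)" by blast
  have act: "shuffle_eq E (letter_act E l w) z" using letter_act_cancel[OF z] .
  have "\<not> (\<exists>y. shuffle_eq E z (l # y))"
    using shuffle_reduced_shuffle_eq[OF z assms] shuffle_reduced_Cons_iff[of E "inv_letter l" z] by simp
  then have "\<not> (\<exists>y. shuffle_eq E (letter_act E l w) (l # y))"
    using act shuffle_eq_trans shuffle_eq_sym by blast
  then have "letter_act E (inv_letter l) (letter_act E l w) = inv_letter l # letter_act E l w"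
    using letter_act_no_cancel[of E _ "inv_letter l"] by simp
  also have "shuffle_eq E \<dots> w"
    using shuffle_eq_Cons[OF act] z shuffle_eq_sym shuffle_eq_trans by blast
  finally show ?thesis .
next
  case False
  then show ?thesis
    using letter_act_cancel[of E "l # w" "inv_letter l" w] by (simp add: letter_act_no_cancel)
qed

lemma letter_act_commute_one_cancels:
  assumes "commutes E (fst l1) (fst l2)" "shuffle_eq E w (inv_letter l2 # z)"
    and "\<not> (\<exists>z. shuffle_eq E w (inv_letter l1 # z))"
  shows "shuffle_eq E (letter_act E l1 (letter_act E l2 w)) (letter_act E l2 (letter_act E l1 w))"
proof -
  have act2: "shuffle_eq E (letter_act E l2 w) z" by (rule letter_act_cancel[OF assms(2)])
  have "\<not> shuffle_eq E z (inv_letter l1 # y)" for y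
  proof
    assume "shuffle_eq E z (inv_letter l1 # y)"
    then have "shuffle_eq E w (inv_letter l2 # inv_letter l1 # y)"
      using assms(2) shuffle_eq_Cons shuffle_eq_trans by blast
    moreover have "shuffle_eq E (inv_letter l2 # inv_letter l1 # y) (inv_letter l1 # inv_letter l2 # y)"
      using shuffle_eq_swap[of E "inv_letter l2" "inv_letter l1" "[]"] commutes_sym[OF assms(1)] by simp
    ultimately show False using assms(3) shuffle_eq_trans by blast
  qed
  then have "\<not> (\<exists>y. shuffle_eq E (letter_act E l2 w) (inv_letter l1 # y))"
    using shuffle_eq_trans[OF shuffle_eq_sym[OF act2]] by blast
  then have "letter_act E l1 (letter_act E l2 w) = l1 # letter_act E l2 w"
    by (rule letter_act_no_cancel)
  also have "shuffle_eq E \<dots> (l1 # z)" using shuffle_eq_Cons[OF act2] .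
  finally have lhs: "shuffle_eq E (letter_act E l1 (letter_act E l2 w)) (l1 # z)" .
  have "shuffle_eq E (l1 # inv_letter l2 # z) (inv_letter l2 # l1 # z)"
    using shuffle_eq_swap[of E l1 "inv_letter l2" "[]"] assms(1) by simp
  with shuffle_eq_Cons[OF assms(2)] have "shuffle_eq E (l1 # w) (inv_letter l2 # l1 # z)"
    by (rule shuffle_eq_trans)
  then have "shuffle_eq E (letter_act E l2 (letter_act E l1 w)) (l1 # z)"
    using letter_act_no_cancel[OF assms(3)] letter_act_cancel by simp
  with lhs show ?thesis using shuffle_eq_sym shuffle_eq_trans by blast
qed

lemma letter_act_commute_none_cancels:
  assumes "commutes E (fst l1) (fst l2)"
    and "\<not> (\<exists>z. shuffle_eq E w (inv_letter l1 # z))" "\<not> (\<exists>z. shuffle_eq E w (inv_letter l2 # z))"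
  shows "shuffle_eq E (letter_act E l1 (letter_act E l2 w)) (letter_act E l2 (letter_act E l1 w))"
proof -
  have "l2 \<noteq> inv_letter l1" "l1 \<noteq> inv_letter l2"
    using assms(1) by (auto simp: commutes_def)
  then have "\<not> (\<exists>z. shuffle_eq E (l2 # w) (inv_letter l1 # z))"
    and "\<not> (\<exists>z. shuffle_eq E (l1 # w) (inv_letter l2 # z))"
    using assms(2,3) by (metis shuffle_eq_Cons_other)+
  then show ?thesis
    using assms(2,3) shuffle_eq_swap[OF assms(1), of "[]"] by (simp add: letter_act_no_cancel)
qed

lemma letter_act_commute:
  assumes "commutes E (fst l1) (fst l2)"
  shows "shuffle_eq E (letter_act E l1 (letter_act E l2 w)) (letter_act E l2 (letter_act E l1 w))"
proof (cases "\<exists>z. shuffle_eq E w (inv_letter l1 # z)"; cases "\<exists>z. shuffle_eq E w (inv_letter l2 # z)")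
  assume "\<exists>z. shuffle_eq E w (inv_letter l1 # z)" "\<exists>z. shuffle_eq E w (inv_letter l2 # z)"
  then obtain z1 z2 where z1: "shuffle_eq E w (inv_letter l1 # z1)" and z2: "shuffle_eq E w (inv_letter l2 # z2)"
    by blast
  have "inv_letter l1 \<noteq> inv_letter l2" using assms by (metis commutes_irrefl fst_inv_letter)
  then obtain z where "shuffle_eq E z1 (inv_letter l2 # z)" "shuffle_eq E z2 (inv_letter l1 # z)"
    using shuffle_eq_Cons_Cons[OF z1 z2] by blast
  then have "shuffle_eq E (letter_act E l2 (letter_act E l1 w)) z"
    and "shuffle_eq E (letter_act E l1 (letter_act E l2 w)) z"
    using letter_act_cancel[OF z1] letter_act_cancel[OF z2]
    by (blast intro: letter_act_cancel shuffle_eq_trans)+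
  then show ?thesis using shuffle_eq_sym shuffle_eq_trans by blast
next
  assume "\<not> (\<exists>z. shuffle_eq E w (inv_letter l1 # z))" "\<exists>z. shuffle_eq E w (inv_letter l2 # z)"
  then show ?thesis using letter_act_commute_one_cancels[OF assms] by blast
next
  assume "\<exists>z. shuffle_eq E w (inv_letter l1 # z)" "\<not> (\<exists>z. shuffle_eq E w (inv_letter l2 # z))"
  then show ?thesis
    using letter_act_commute_one_cancels[OF commutes_sym[OF assms]] shuffle_eq_sym by blast
next
  assume "\<not> (\<exists>z. shuffle_eq E w (inv_letter l1 # z))" "\<not> (\<exists>z. shuffle_eq E w (inv_letter l2 # z))"
  then show ?thesis using letter_act_commute_none_cancels[OF assms] by blast
qed

fun word_act :: "('v \<Rightarrow> 'v \<Rightarrow> bool) \<Rightarrow> 'v letter list \<Rightarrow> 'v letter list \<Rightarrow> 'v letter list" where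
  "word_act E [] w = w"
| "word_act E (l # u) w = letter_act E l (word_act E u w)"

lemma word_act_append: "word_act E (xs @ ys) w = word_act E xs (word_act E ys w)"
  by (induction xs) auto

lemma word_act_cong: "shuffle_eq E w w' \<Longrightarrow> shuffle_eq E (word_act E u w) (word_act E u w')"
  by (induction u) (auto intro: letter_act_cong)

lemma word_act_reduced: "shuffle_reduced E w \<Longrightarrow> shuffle_reduced E (word_act E u w)"
  by (induction u) (auto intro: letter_act_reduced)

lemma word_act_raag_step:
  assumes "symp E" "raag_step E u u'" "shuffle_reduced E w"
  shows "shuffle_eq E (word_act E u w) (word_act E u' w)"
  using assms(2)
proof cases
  case (cancel xs l ys)
  have "shuffle_eq E (letter_act E l (letter_act E (inv_letter l) (word_act E ys w))) (word_act E ys w)"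
    using letter_act_inv_letter[OF word_act_reduced[OF assms(3)], of "inv_letter l"] by simp
  then show ?thesis
    using cancel word_act_cong by (simp add: word_act_append)
next
  case (swap x y xs s t ys)
  then have "commutes E (fst (x, s)) (fst (y, t))"
    using assms(1) by (auto simp: commutes_def dest: sympD)
  then have "shuffle_eq E (letter_act E (x, s) (letter_act E (y, t) (word_act E ys w)))
      (letter_act E (y, t) (letter_act E (x, s) (word_act E ys w)))"
    by (rule letter_act_commute)
  then show ?thesis
    using swap word_act_cong by (simp add: word_act_append)
qed

lemma word_act_rel_eq:
  assumes "symp E" "rel_eq E u u'"
  shows "shuffle_eq E (word_act E u []) (word_act E u' [])"
  using assms(2) unfolding rel_eq_def
proof (induction rule: equivclp_induct)
  case (step y z)
  from step(2) have "shuffle_eq E (word_act E y []) (word_act E z [])"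
  proof
    assume "raag_step E y z"
    then show ?thesis by (rule word_act_raag_step[OF assms(1) _ shuffle_reduced_Nil])
  next
    assume "raag_step E z y"
    then show ?thesis by (rule shuffle_eq_sym[OF word_act_raag_step[OF assms(1) _ shuffle_reduced_Nil]])
  qed
  with step(3) show ?case by (rule shuffle_eq_trans)
qed simp

lemma word_act_self: "shuffle_reduced E w \<Longrightarrow> shuffle_eq E (word_act E w []) w"
proof (induction w)
  case (Cons l w)
  then have "shuffle_reduced E w" "\<not> (\<exists>z. shuffle_eq E w (inv_letter l # z))"
    by (simp_all add: shuffle_reduced_Cons_iff)
  with Cons.IH have "shuffle_eq E (letter_act E l (word_act E w [])) (letter_act E l w)"
    by (blast intro: letter_act_cong)
  with \<open>\<not> (\<exists>z. _)\<close> show ?case by (simp add: letter_act_no_cancel)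
qed simp

theorem shuffle_eq_if_rel_eq:
  assumes "symp E" "shuffle_reduced E u" "shuffle_reduced E w" "rel_eq E u w"
  shows "shuffle_eq E u w"
proof -
  have "shuffle_eq E u (word_act E u [])" by (rule shuffle_eq_sym[OF word_act_self[OF assms(2)]])
  also have "shuffle_eq E \<dots> (word_act E w [])" by (rule word_act_rel_eq[OF assms(1,4)])
  also have "shuffle_eq E \<dots> w" by (rule word_act_self[OF assms(3)])
  finally show ?thesis .
qed

section \<open>Word length, start sets and normal forms\<close>

lemma shorter_if_not_shuffle_reduced:
  assumes "\<not> shuffle_reduced E w"
  obtains w' where "rel_eq E w w'" "length w' + 2 = length w"
proof -
  obtain x l y where xly: "shuffle_eq E w (x @ l # inv_letter l # y)"
    using assms unfolding shuffle_reduced_def by blast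
  show ?thesis
  proof (rule that)
    show "rel_eq E w (x @ y)"
      using rel_eq_if_shuffle_eq[OF xly] rel_eq_cancel rel_eq_trans by blast
    show "length (x @ y) + 2 = length w"
      using shuffle_eq_length[OF xly] by simp
  qed
qed

lemma shuffle_reduced_exists: "\<exists>r. shuffle_reduced E r \<and> rel_eq E w r \<and> length r \<le> length w"
proof (induction "length w" arbitrary: w rule: less_induct)
  case less
  show ?case
  proof (cases "shuffle_reduced E w")
    case False
    then obtain w' where w': "rel_eq E w w'" "length w' + 2 = length w"
      using shorter_if_not_shuffle_reduced by blast
    then obtain r where "shuffle_reduced E r" "rel_eq E w' r" "length r \<le> length w'"
      using less(1)[of w'] by auto
    with w' show ?thesis by (auto intro: rel_eq_trans)
  qed auto
qed

lemma wlen_le_length: "rel_eq E u w \<Longrightarrow> wlen E w \<le> length u"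
  unfolding wlen_def by (rule Least_le) blast

lemma wlen_eq_length:
  assumes "symp E" "shuffle_reduced E r" "rel_eq E r w"
  shows "wlen E w = length r"
  unfolding wlen_def
proof (rule Least_equality)
  show "\<exists>u. rel_eq E u w \<and> length u = length r" using assms(3) by blast
next
  fix n assume "\<exists>u. rel_eq E u w \<and> length u = n"
  then obtain u where u: "rel_eq E u w" "length u = n" by blast
  obtain r' where r': "shuffle_reduced E r'" "rel_eq E u r'" "length r' \<le> length u"
    using shuffle_reduced_exists by blast
  have "rel_eq E r' r" using r'(2) u(1) assms(3) rel_eq_sym rel_eq_trans by metis
  then have "length r' = length r"
    using shuffle_eq_if_rel_eq[OF assms(1) r'(1) assms(2)] shuffle_eq_length by blast
  with r'(3) u(2) show "length r \<le> n" by simp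
qed

lemma wlen_cong: "rel_eq E u w \<Longrightarrow> wlen E u = wlen E w"
  unfolding wlen_def by (metis rel_eq_sym rel_eq_trans)

lemma reduced_if_length_le_wlen:
  assumes "rel_eq E u w" "length u \<le> wlen E w"
  shows "reduced E u"
  using assms wlen_cong[OF assms(1)] wlen_le_length[OF rel_eq_refl, of E u]
  unfolding reduced_def by simp

lemma reduced_iff_shuffle_reduced:
  assumes "symp E"
  shows "reduced E w \<longleftrightarrow> shuffle_reduced E w"
proof
  assume "reduced E w"
  show "shuffle_reduced E w"
  proof (rule ccontr)
    assume "\<not> shuffle_reduced E w"
    then obtain w' where "rel_eq E w w'" "length w' + 2 = length w"
      using shorter_if_not_shuffle_reduced by blast
    then have "wlen E w < length w" using wlen_le_length[of E w' w] rel_eq_sym by fastforce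
    with \<open>reduced E w\<close> show False unfolding reduced_def by simp
  qed
next
  assume "shuffle_reduced E w"
  then show "reduced E w" unfolding reduced_def using wlen_eq_length[OF assms] by simp
qed

lemma wlen_append_le:
  assumes "symp E"
  shows "wlen E (u @ w) \<le> wlen E u + wlen E w"
proof -
  obtain ru rw where "shuffle_reduced E ru" "rel_eq E u ru" "shuffle_reduced E rw" "rel_eq E w rw"
    using shuffle_reduced_exists by meson
  then have "wlen E u = length ru" "wlen E w = length rw" "rel_eq E (ru @ rw) (u @ w)"
    using wlen_eq_length[OF assms] rel_eq_sym rel_eq_append by blast+
  then show ?thesis using wlen_le_length by fastforce
qed

lemma start_set_cong: "rel_eq E u w \<Longrightarrow> start_set E u = start_set E w"
  unfolding start_set_def by (metis rel_eq_sym rel_eq_trans)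

lemma supp_cong: "rel_eq E u w \<Longrightarrow> supp E u = supp E w"
  unfolding supp_def by (metis rel_eq_sym rel_eq_trans)

lemma start_set_shuffle_reduced:
  assumes "symp E" "shuffle_reduced E w"
  shows "start_set E w = {fst c | c p q. w = p @ c # q \<and> commutes_past E c p}"
proof (intro set_eqI iffI)
  fix v assume "v \<in> start_set E w"
  then obtain u where u: "rel_eq E u w" "reduced E u" "u \<noteq> []" "fst (hd u) = v"
    unfolding start_set_def by blast
  then have "shuffle_eq E w (hd u # tl u)"
    using shuffle_eq_if_rel_eq[OF assms _ rel_eq_sym[OF u(1)]] reduced_iff_shuffle_reduced[OF assms(1)]
    by simp
  with u(4) show "v \<in> {fst c | c p q. w = p @ c # q \<and> commutes_past E c p}"
    unfolding shuffle_eq_Cons_iff by blast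
next
  fix v assume "v \<in> {fst c | c p q. w = p @ c # q \<and> commutes_past E c p}"
  then obtain c p q where cpq: "w = p @ c # q" "commutes_past E c p" "v = fst c" by blast
  then have "shuffle_eq E w (c # p @ q)" by (simp add: shuffle_eq_move_to_front)
  moreover from this have "reduced E (c # p @ q)"
    using assms reduced_iff_shuffle_reduced shuffle_reduced_shuffle_eq by blast
  ultimately show "v \<in> start_set E w"
    unfolding start_set_def using cpq(3) rel_eq_if_shuffle_eq rel_eq_sym by fastforce
qed

lemma start_set_front_split:
  assumes "symp E" "shuffle_reduced E w" "w = p @ c # q" "commutes_past E c p"
  shows "fst c \<in> start_set E w"
  using start_set_shuffle_reduced[OF assms(1,2)] assms(3,4) by blast

lemma supp_shuffle_reduced:
  assumes "symp E" "shuffle_reduced E w"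
  shows "supp E w = fst ` set w"
proof (intro set_eqI iffI)
  fix v assume "v \<in> supp E w"
  then obtain u where u: "rel_eq E u w" "reduced E u" "v \<in> fst ` set u"
    unfolding supp_def by blast
  then have "shuffle_eq E u w"
    using shuffle_eq_if_rel_eq[OF assms(1) _ assms(2)] reduced_iff_shuffle_reduced[OF assms(1)] by blast
  with u(3) show "v \<in> fst ` set w" using shuffle_eq_set by metis
next
  fix v assume "v \<in> fst ` set w"
  moreover have "reduced E w" using assms reduced_iff_shuffle_reduced by blast
  ultimately show "v \<in> supp E w" unfolding supp_def using rel_eq_refl by blast
qed

lemma normal_Nil [simp]: "normal E []"
  unfolding normal_def initially_normal_def reduced_def wlen_def
  by (auto intro!: Least_equality[symmetric])

lemma normal_Cons: "normal E (m # u) \<longleftrightarrow> initially_normal E (m # u) \<and> normal E u"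
  unfolding normal_def by (simp add: All_less_Suc2 flip: less_Suc_eq_le)

lemma normal_imp_shuffle_reduced: "symp E \<Longrightarrow> normal E u \<Longrightarrow> shuffle_reduced E u"
  unfolding normal_def initially_normal_def
  using reduced_iff_shuffle_reduced[of E u] by (metis drop_0 zero_le)

lemma normal_unique:
  assumes "symp E" "normal E u" "normal E w" "rel_eq E u w"
  shows "u = w"
  using assms(2-4)
proof (induction u arbitrary: w)
  case Nil
  then show ?case
    using shuffle_eq_if_rel_eq[OF assms(1)] normal_imp_shuffle_reduced[OF assms(1)] by fastforce
next
  case (Cons m u)
  have mu_w: "shuffle_eq E (m # u) w"
    using Cons.prems shuffle_eq_if_rel_eq[OF assms(1)] normal_imp_shuffle_reduced[OF assms(1)] by blast
  then obtain m' w' where w: "w = m' # w'"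
    using shuffle_eq_length by (cases w) fastforce+
  have "start_set E (m # u) = start_set E (m' # w')" using start_set_cong Cons.prems(3) w by blast
  then have "fst m = fst m'"
    using Cons.prems(1,2) w by (simp add: normal_Cons initially_normal_def)
  then have "m = m'"
    using shuffle_eq_Cons_Cons[OF shuffle_eq_refl mu_w[unfolded w]] by auto
  with mu_w w have "shuffle_eq E (m # u) (m # w')" by simp
  then have "shuffle_eq E u w'" by (rule shuffle_eq_Cons_cancel[OF shuffle_eq_refl])
  moreover have "normal E u" "normal E w'" using Cons.prems(1,2) w by (simp_all add: normal_Cons)
  ultimately have "u = w'" using Cons.IH rel_eq_if_shuffle_eq by blast
  with w \<open>m = m'\<close> show ?case by simp
qed

lemma start_set_Max_to_front:
  fixes E :: "'v::{finite,linorder} \<Rightarrow> 'v \<Rightarrow> bool"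
  assumes "symp E" "shuffle_reduced E r" "r \<noteq> []"
  obtains c z where "shuffle_eq E r (c # z)" "fst c = Max (start_set E r)"
proof -
  let ?S = "start_set E r"
  have S: "v \<in> ?S \<longleftrightarrow> (\<exists>c p q. v = fst c \<and> r = p @ c # q \<and> commutes_past E c p)" for v
    using start_set_shuffle_reduced[OF assms(1,2)] by blast
  obtain r0 rs where "r = [] @ r0 # rs" using assms(3) by (cases r) auto
  then have "fst r0 \<in> ?S" unfolding S by fastforce
  then have "Max ?S \<in> ?S" by (intro Max_in) auto
  then obtain c p q where "r = p @ c # q" "commutes_past E c p" "fst c = Max ?S"
    unfolding S[of "Max ?S"] by metis
  then show ?thesis using that[of c "p @ q"] by (simp add: shuffle_eq_move_to_front)
qed

lemma normal_exists:
  assumes "symp E" "shuffle_reduced E r"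
  shows "\<exists>u. normal E u \<and> rel_eq E u r"
  using assms(2)
proof (induction "length r" arbitrary: r rule: less_induct)
  case less
  show ?case
  proof (cases "r = []")
    case False
    then obtain c z where r_c: "shuffle_eq E r (c # z)" and c: "fst c = Max (start_set E r)"
      using start_set_Max_to_front[OF assms(1) less(2)] by blast
    have red: "shuffle_reduced E (c # z)" by (rule shuffle_reduced_shuffle_eq[OF r_c less(2)])
    then have red_z: "shuffle_reduced E z" by (simp add: shuffle_reduced_Cons_iff)
    moreover have "length z < length r" using shuffle_eq_length[OF r_c] by simp
    ultimately obtain u where u: "normal E u" "rel_eq E u z"
      using less(1) by blast
    have "rel_eq E (c # u) (c # z)"
      using rel_eq_append[OF rel_eq_refl u(2), of "[c]"] by simp
    also have "rel_eq E \<dots> r" by (rule rel_eq_sym[OF rel_eq_if_shuffle_eq[OF r_c]])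
    finally have rel: "rel_eq E (c # u) r" .
    have "length u = length z"
      using wlen_eq_length[OF assms(1) red_z rel_eq_sym[OF u(2)]]
        wlen_eq_length[OF assms(1) normal_imp_shuffle_reduced[OF assms(1) u(1)] rel_eq_refl] by simp
    moreover have "wlen E r = length (c # z)"
      using wlen_eq_length[OF assms(1) red rel_eq_sym[OF rel_eq_if_shuffle_eq[OF r_c]]] .
    ultimately have "reduced E (c # u)"
      using reduced_if_length_le_wlen[OF rel] by simp
    moreover have "start_set E (c # u) = start_set E r" by (rule start_set_cong[OF rel])
    ultimately have "normal E (c # u)"
      using u(1) c by (simp add: normal_Cons initially_normal_def)
    with rel show ?thesis by blast
  qed (use normal_Nil rel_eq_refl in blast)
qed

lemma sigma_eq:
  assumes "symp E" "normal E u" "rel_eq E u w"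
  shows "sigma E w = u"
  unfolding sigma_def
proof (rule the_equality)
  fix u' assume "normal E u' \<and> rel_eq E u' w"
  then show "u' = u"
    using normal_unique[OF assms(1), of u' u] assms(2) rel_eq_trans[OF _ rel_eq_sym[OF assms(3)]]
    by blast
qed (use assms in blast)

lemma sigma_normal:
  assumes "symp E"
  shows "normal E (sigma E w)" "rel_eq E (sigma E w) w"
proof -
  obtain r where r: "shuffle_reduced E r" "rel_eq E w r"
    using shuffle_reduced_exists by blast
  obtain u where u: "normal E u" "rel_eq E u r"
    using normal_exists[OF assms r(1)] by blast
  then have "rel_eq E u w" using rel_eq_trans[OF u(2) rel_eq_sym[OF r(2)]] by blast
  with u(1) show "normal E (sigma E w)" "rel_eq E (sigma E w) w"
    using sigma_eq[OF assms] by simp_all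
qed

lemma length_sigma: "symp E \<Longrightarrow> length (sigma E w) = wlen E w"
  using wlen_eq_length[OF _ normal_imp_shuffle_reduced sigma_normal(2)] sigma_normal(1) by metis

section \<open>Geodesic products with a power\<close>

lemma start_set_append:
  assumes "symp E" "shuffle_reduced E (x @ y)"
  shows "start_set E (x @ y) \<subseteq> start_set E x \<union> {v \<in> start_set E y. \<forall>c\<in>set x. commutes E (fst c) v}"
proof
  fix v assume "v \<in> start_set E (x @ y)"
  then obtain c p q where cpq: "v = fst c" "x @ y = p @ c # q" "commutes_past E c p"
    using start_set_shuffle_reduced[OF assms] by blast
  from cpq(2) consider r where "x = p @ c # r" | r where "p = x @ r" "y = r @ c # q"
    unfolding append_eq_append_Cons_conv by blast
  then show "v \<in> start_set E x \<union> {v \<in> start_set E y. \<forall>c\<in>set x. commutes E (fst c) v}"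
  proof cases
    case (1 r)
    then have "v \<in> start_set E x"
      using start_set_front_split[OF assms(1) shuffle_reduced_appendD(1)[OF assms(2)]] cpq by blast
    then show ?thesis by blast
  next
    case (2 r)
    then have "v \<in> start_set E y"
      using start_set_front_split[OF assms(1) shuffle_reduced_appendD(2)[OF assms(2)], of r c q] cpq
      by simp
    with 2 cpq show ?thesis by auto
  qed
qed

lemma start_set_append_subset:
  assumes "symp E" "shuffle_reduced E (x @ y)" "start_set E x \<subseteq> {v0}"
    and "\<forall>v. \<not> (\<forall>c\<in>set x. commutes E (fst c) v)"
  shows "start_set E (x @ y) \<subseteq> {v0}"
  using start_set_append[OF assms(1,2)] assms(3,4) by blast

lemma normal_append:
  assumes "symp E" "\<forall>v. v < v0 \<longrightarrow> E v v0" "normal E x" "normal E y" "shuffle_reduced E (x @ y)"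
    and "start_set E y \<subseteq> {v0}"
  shows "normal E (x @ y)"
  using assms(3,5)
proof (induction x)
  case Nil
  then show ?case using assms(4) by simp
next
  case (Cons m x)
  have red: "shuffle_reduced E (m # x @ y)" "shuffle_reduced E (x @ y)"
    using Cons.prems(2) shuffle_reduced_Cons_iff[of E m "x @ y"] by simp_all
  have normal_xy: "normal E (x @ y)"
    using Cons.IH Cons.prems(1) red(2) by (simp add: normal_Cons)
  have max_m: "fst m = Max (start_set E (m # x))"
    using Cons.prems(1) by (simp add: normal_Cons initially_normal_def)
  have "Max (start_set E (m # x @ y)) = fst m"
  proof (rule Max_eqI)
    show "fst m \<in> start_set E (m # x @ y)"
      using start_set_front_split[OF assms(1) red(1), of "[]"] by simp
  next
    have "start_set E (m # x @ y)
        \<subseteq> start_set E (m # x) \<union> {v \<in> start_set E y. \<forall>c\<in>set (m # x). commutes E (fst c) v}"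
      using start_set_append[OF assms(1), of "m # x" y] red(1) by simp
    moreover fix v assume "v \<in> start_set E (m # x @ y)"
    ultimately consider "v \<in> start_set E (m # x)" | "v = v0" "commutes E (fst m) v0"
      using assms(6) by auto
    then show "v \<le> fst m"
    proof cases
      case 1
      then show ?thesis using max_m by simp
    next
      case 2
      then show ?thesis using assms(2) by (auto simp: commutes_def not_less)
    qed
  qed simp
  with red(1) normal_xy show ?case
    using reduced_iff_shuffle_reduced[OF assms(1)]
    by (simp add: normal_Cons initially_normal_def)
qed

lemma strongly_non_split_not_commuting:
  assumes "symp E" "strongly_non_split E g" "shuffle_reduced E u" "rel_eq E u g"
  shows "\<not> (\<forall>c\<in>set u. commutes E (fst c) v)"
proof
  assume commuting: "\<forall>c\<in>set u. commutes E (fst c) v"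
  have "shuffle_reduced E [(v, True)]" by (simp add: shuffle_reduced_Cons_iff)
  then have "supp E [(v, True)] = {v}" using supp_shuffle_reduced[OF assms(1)] by simp
  moreover have "supp E g = fst ` set u"
    using supp_cong[OF assms(4)] supp_shuffle_reduced[OF assms(1,3)] by simp
  ultimately have "disj_commute E [(v, True)] g"
    using commuting unfolding disj_commute_def commutes_def by auto
  with assms(2) show False unfolding strongly_non_split_def by blast
qed

lemma length_wpow: "length (wpow w k) = k * length w"
  by (simp add: wpow_def length_concat sum_list_replicate)

lemma rel_eq_wpow: "rel_eq E u w \<Longrightarrow> rel_eq E (wpow u k) (wpow w k)"
  by (induction k) (auto simp: wpow_def intro: rel_eq_append)

lemma wpow_split_last: "k \<ge> 1 \<Longrightarrow> wpow w k = wpow w (k - 1) @ w"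
  by (cases k) (simp_all add: wpow_def replicate_append_same[symmetric])

lemma normal_wpow_append:
  assumes "symp E" "\<forall>v. v < v0 \<longrightarrow> E v v0"
    and "normal E g" "start_set E g \<subseteq> {v0}" "\<forall>v. \<not> (\<forall>c\<in>set g. commutes E (fst c) v)"
    and "normal E c" "start_set E c \<subseteq> {v0}" "shuffle_reduced E (wpow g k @ c)"
  shows "normal E (wpow g k @ c) \<and> start_set E (wpow g k @ c) \<subseteq> {v0}"
  using assms(8)
proof (induction k)
  case 0
  then show ?case using assms(6,7) by (simp add: wpow_def)
next
  case (Suc k)
  then have red: "shuffle_reduced E (g @ wpow g k @ c)" by (simp add: wpow_def)
  with Suc.IH have "normal E (wpow g k @ c)" "start_set E (wpow g k @ c) \<subseteq> {v0}"
    using shuffle_reduced_appendD(2) by blast+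
  then have "normal E (g @ wpow g k @ c)"
    using normal_append[OF assms(1,2,3) _ red] by blast
  moreover have "start_set E (g @ wpow g k @ c) \<subseteq> {v0}"
    using start_set_append_subset[OF assms(1) red assms(4,5)] .
  ultimately show ?case by (simp add: wpow_def)
qed

lemma rel_eq_sigma_wpow:
  assumes "symp E" "n \<ge> 1"
  shows "rel_eq E (sigma E a @ wpow (sigma E g) (n - 1) @ sigma E (g @ b)) (a @ wpow g n @ b)"
  using rel_eq_append[OF sigma_normal(2)[OF assms(1)]
      rel_eq_append[OF rel_eq_wpow[OF sigma_normal(2)[OF assms(1)]] sigma_normal(2)[OF assms(1)]]]
  by (simp add: wpow_split_last[OF assms(2)])

lemma geodesic_wpow_reduced:
  assumes "symp E" "n \<ge> 1"
    and geodesic: "wlen E (a @ wpow g n @ b) = wlen E a + n * wlen E g + wlen E b"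
  shows "shuffle_reduced E (sigma E a @ wpow (sigma E g) (n - 1) @ sigma E (g @ b))"
    and "shuffle_reduced E (sigma E g @ sigma E b)"
proof -
  let ?Y = "sigma E a @ wpow (sigma E g) (n - 1) @ sigma E (g @ b)"
  have "length ?Y = wlen E a + (n - 1) * wlen E g + wlen E (g @ b)"
    by (simp add: length_sigma[OF assms(1)] length_wpow)
  moreover have "wlen E (a @ wpow g n @ b) \<le> length ?Y"
    by (rule wlen_le_length[OF rel_eq_sigma_wpow[OF assms(1,2)]])
  moreover have "n * wlen E g = (n - 1) * wlen E g + wlen E g"
    using assms(2) by (metis add.commute le_add_diff_inverse mult_Suc plus_1_eq_Suc)
  moreover have "wlen E (g @ b) \<le> wlen E g + wlen E b" by (rule wlen_append_le[OF assms(1)])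
  ultimately have "length ?Y \<le> wlen E (a @ wpow g n @ b)" "wlen E g + wlen E b \<le> wlen E (g @ b)"
    using geodesic by linarith+
  then have "reduced E ?Y" "reduced E (sigma E g @ sigma E b)"
    using reduced_if_length_le_wlen[OF rel_eq_sigma_wpow[OF assms(1,2)]]
      reduced_if_length_le_wlen[OF rel_eq_append[OF sigma_normal(2)[OF assms(1)] sigma_normal(2)[OF assms(1)]]]
    by (simp_all add: length_sigma[OF assms(1)])
  then show "shuffle_reduced E ?Y" "shuffle_reduced E (sigma E g @ sigma E b)"
    by (simp_all add: reduced_iff_shuffle_reduced[OF assms(1)])
qed

theorem proposition2p10:
  fixes E :: "'v::{finite,linorder} \<Rightarrow> 'v \<Rightarrow> bool"
    and a g b :: "'v letter list" and n :: nat
  assumes "symp E" and "irreflp E"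
    and "n \<ge> 1"
    and "wlen E (a @ wpow g n @ b) = wlen E a + n * wlen E g + wlen E b"
    and "strongly_non_split E g"
    and "\<exists>v0. SD_conical E g v0"
  shows "sigma E (a @ wpow g n @ b) = sigma E a @ wpow (sigma E g) (n - 1) @ sigma E (g @ b)"
proof -
  obtain v0 where start_g: "start_set E g = {v0}" and SD: "\<forall>v. v < v0 \<longrightarrow> E v v0"
    using assms(6) unfolding SD_conical_def conical_def by blast
  note sigma = sigma_normal[OF assms(1)]
  note reduced = geodesic_wpow_reduced[OF assms(1,3,4)]
  have start_sigma_g: "start_set E (sigma E g) \<subseteq> {v0}"
    using start_set_cong[OF sigma(2)] start_g by simp
  have not_commuting: "\<forall>v. \<not> (\<forall>c\<in>set (sigma E g). commutes E (fst c) v)"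
    using strongly_non_split_not_commuting[OF assms(1,5) normal_imp_shuffle_reduced sigma(2)] sigma(1)
      assms(1) by blast
  have "start_set E (sigma E (g @ b)) = start_set E (sigma E g @ sigma E b)"
    using start_set_cong rel_eq_trans[OF sigma(2) rel_eq_sym[OF rel_eq_append[OF sigma(2) sigma(2)]]]
    by blast
  also have "\<dots> \<subseteq> {v0}"
    by (rule start_set_append_subset[OF assms(1) reduced(2) start_sigma_g not_commuting])
  finally have "normal E (wpow (sigma E g) (n - 1) @ sigma E (g @ b))
      \<and> start_set E (wpow (sigma E g) (n - 1) @ sigma E (g @ b)) \<subseteq> {v0}"
    using normal_wpow_append[OF assms(1) SD sigma(1) start_sigma_g not_commuting sigma(1)]
      shuffle_reduced_appendD(2)[OF reduced(1)] by blast
  then have "normal E (sigma E a @ wpow (sigma E g) (n - 1) @ sigma E (g @ b))"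
    using normal_append[OF assms(1) SD sigma(1) _ reduced(1)] by blast
  then show ?thesis by (rule sigma_eq[OF assms(1) _ rel_eq_sigma_wpow[OF assms(1,3)]])
qed

end
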